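(* Let $N\ge1$ be an integer, $d>0$, $0\le s_1\le\dots\le s_N$, and let $T\ge (N+1)d$. Let (P) be the problem $$\min_{x\in\mathbb{R}^{N+1}}\ \sum_{i=1}^{N+1}x_i^2$$ subject to - $\sum_{i=1}^k x_i\ge s_k+kd$ for $1\le k\le N$, - $x_i\ge 2d$ for $2\le i\le N$, - $x_{N+1}\ge d$, - $\sum_{i=1}^{N+1}x_i=T+Nd$. Assume (P) is feasible, and let $x^*$ be its optimal solution. Let $(P^e)$ be the same problem without the constraints $x_i\ge 2d$ ($2\le i\le N$) and $x_{N+1}\ge d$, and let $x^e$ be the optimal solution of $(P^e)$. If $x_i^e\ge 2d$ for all $2\le i\le N$ and $x_{N+1}^e\ge d$, then $x^*=x^e$. Otherwise, let $n_0$ be the smallest index $i\in\{2,\dots,N+1\}$ at which $x^e$ violates its constraint in (P), meaning $x_i^e<2d$ if $i\le N$, or $x_{N+1}^e<d$ if $i=N+1$. Then $n_0\le N$, and the following hold. - If $n_0>2$, then $x_i^*=x_i^e$ for $1\le i\le n_0-1$, $x_i^*=2d$ for $n_0\le i\le N$, and $x_{N+1}^*=T+Nd-\sum_{i=1}^N x_i^*$. - If $n_0=2$ and $x_1^e=s_1+d$, then $x^*$ is given by the same formulas with $n_0=2$. - If $n_0=2$ and $x_1^e\ne s_1+d$, then $x_1^*=\max\left\{\frac{T-(N-2)d}{2},\ \max_{1\le k\le N}\{s_k-(k-2)d\}\right\}$, $x_i^*=2d$ for $2\le i\le N$, and $x_{N+1}^*=T-(N-2)d-x_1^*$.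
   Context: This optimization problem arises from minimizing the area under the age-of-information curve of a single energy harvesting transmitter with energy arrival times $s_k$, fixed service time $d$, and session length $T$. Both (P) and $(P^e)$ have strictly convex objectives, so their optimal solutions are unique whenever they exist. *)

theory Defs
  imports Complex_Main
begin

(* Vectors x in R^(N+1) are represented as functions nat => real; only the
   components x 1, ..., x (N+1) are meaningful. *)

definition aoi_obj :: "nat \<Rightarrow> (nat \<Rightarrow> real) \<Rightarrow> real" where
  "aoi_obj N x = (\<Sum>i=1..N+1. (x i)^2)"

definition feas_Pe :: "nat \<Rightarrow> real \<Rightarrow> (nat \<Rightarrow> real) \<Rightarrow> real \<Rightarrow> (nat \<Rightarrow> real) \<Rightarrow> bool" where
  "feas_Pe N d s T x \<longleftrightarrow>
     (\<forall>k\<in>{1..N}. (\<Sum>i=1..k. x i) \<ge> s k + real k * d) \<and>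
     (\<Sum>i=1..N+1. x i) = T + real N * d"

definition feas_P :: "nat \<Rightarrow> real \<Rightarrow> (nat \<Rightarrow> real) \<Rightarrow> real \<Rightarrow> (nat \<Rightarrow> real) \<Rightarrow> bool" where
  "feas_P N d s T x \<longleftrightarrow>
     feas_Pe N d s T x \<and> (\<forall>i\<in>{2..N}. x i \<ge> 2 * d) \<and> x (N+1) \<ge> d"

definition is_optimal :: "nat \<Rightarrow> ((nat \<Rightarrow> real) \<Rightarrow> bool) \<Rightarrow> (nat \<Rightarrow> real) \<Rightarrow> bool" where
  "is_optimal N F x \<longleftrightarrow> F x \<and> (\<forall>y. F y \<longrightarrow> aoi_obj N x \<le> aoi_obj N y)"

definition violates :: "nat \<Rightarrow> real \<Rightarrow> (nat \<Rightarrow> real) \<Rightarrow> nat \<Rightarrow> bool" where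
  "violates N d x i \<longleftrightarrow> (2 \<le> i \<and> i \<le> N \<and> x i < 2 * d) \<or> (i = N + 1 \<and> x (N+1) < d)"

end

theory Submission
  imports Defs
begin

(* Both problems minimise a strictly convex function over a convex set, so optima are
   unique, and a feasible y is optimal for (P) as soon as sum_i y_i (z_i - y_i) >= 0 for
   every feasible z. By Abel summation this variational inequality follows from KKT-type
   multipliers, packaged as a nonincreasing "potential" below y.

   Moving mass between two neighbouring components of x^e shows that x^e is nonincreasing
   and that it strictly decreases only where a prefix constraint is tight. Hence, once x^e
   violates a bound of (P) at n0, it stays below 2d. The candidate that keeps x^e before n0
   (resp. raises x_1 to the stated maximum when n0 = 2 and the first prefix constraint is
   slack), puts 2d at n0, ..., N and the remaining budget at N+1 is feasible and admits such
   a potential, so it is the optimum of (P). *)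

lemma sum_atLeastAtMost_split:
  fixes f :: "nat \<Rightarrow> 'a::comm_monoid_add"
  assumes "m \<le> n + 1" "n \<le> p"
  shows "(\<Sum>i=m..p. f i) = (\<Sum>i=m..n. f i) + (\<Sum>i=n+1..p. f i)"
  using sum.ub_add_nat[OF assms(1), of f "p - n"] assms(2) by simp

lemma summation_by_parts:
  fixes a w :: "nat \<Rightarrow> 'a::comm_ring"
  shows "(\<Sum>i=1..n+1. a i * w i)
    = (\<Sum>k=1..n. (a k - a (k+1)) * (\<Sum>i=1..k. w i)) + a (n+1) * (\<Sum>i=1..n+1. w i)"
  by (induction n) (simp_all add: algebra_simps)

lemma is_optimal_if_variational_inequality:
  assumes "F y" and "\<And>z. F z \<Longrightarrow> 0 \<le> (\<Sum>i=1..N+1. y i * (z i - y i))"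
  shows "is_optimal N F y"
  unfolding is_optimal_def
proof (intro conjI allI impI)
  show "F y" by fact
  fix z assume "F z"
  have "aoi_obj N z
      = aoi_obj N y + 2 * (\<Sum>i=1..N+1. y i * (z i - y i)) + (\<Sum>i=1..N+1. (z i - y i)^2)"
    unfolding aoi_obj_def
    by (simp add: power2_eq_square algebra_simps sum.distrib sum_distrib_left sum_subtractf)
  moreover have "0 \<le> (\<Sum>i=1..N+1. (z i - y i)^2)" by (simp add: sum_nonneg)
  ultimately show "aoi_obj N y \<le> aoi_obj N z" using assms(2)[OF \<open>F z\<close>] by linarith
qed

lemma aoi_obj_midpoint:
  "aoi_obj N (\<lambda>i. (x i + y i) / 2)
     = (aoi_obj N x + aoi_obj N y) / 2 - (\<Sum>i=1..N+1. (x i - y i)^2) / 4"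
proof -
  have "((x i + y i) / 2)^2 = ((x i)^2 + (y i)^2) / 2 - (x i - y i)^2 / 4" for i
    by (simp add: power2_eq_square field_simps)
  then show ?thesis unfolding aoi_obj_def
    by (simp add: sum_subtractf sum.distrib sum_divide_distrib[symmetric])
qed

lemma is_optimal_unique:
  assumes midpoint: "\<And>x y. F x \<Longrightarrow> F y \<Longrightarrow> F (\<lambda>i. (x i + y i) / 2)"
    and x: "is_optimal N F x" and y: "is_optimal N F y"
  shows "\<forall>i\<in>{1..N+1}. x i = y i"
proof -
  have "F (\<lambda>i. (x i + y i) / 2)" using x y midpoint unfolding is_optimal_def by blast
  then have "aoi_obj N x \<le> aoi_obj N (\<lambda>i. (x i + y i) / 2)"
    and "aoi_obj N y \<le> aoi_obj N (\<lambda>i. (x i + y i) / 2)"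
    using x y unfolding is_optimal_def by blast+
  then have "(\<Sum>i=1..N+1. (x i - y i)^2) \<le> 0" unfolding aoi_obj_midpoint by argo
  then have "\<forall>i\<in>{1..N+1}. (x i - y i)^2 = 0"
    using sum_nonneg_eq_0_iff[of "{1..N+1}" "\<lambda>i. (x i - y i)^2"] sum_nonneg[of "{1..N+1}" "\<lambda>i. (x i - y i)^2"]
    by simp
  then show ?thesis by simp
qed

lemma feas_P_midpoint:
  assumes x: "feas_P N d s T x" and y: "feas_P N d s T y"
  shows "feas_P N d s T (\<lambda>i. (x i + y i) / 2)"
  unfolding feas_P_def feas_Pe_def
proof (intro conjI ballI)
  have sum_mid: "(\<Sum>i=1..k. (x i + y i) / 2) = ((\<Sum>i=1..k. x i) + (\<Sum>i=1..k. y i)) / 2" for k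
    by (simp add: sum.distrib sum_divide_distrib[symmetric])
  fix k assume "k \<in> {1..N}"
  then have "s k + real k * d \<le> (\<Sum>i=1..k. x i)" "s k + real k * d \<le> (\<Sum>i=1..k. y i)"
    using x y unfolding feas_P_def feas_Pe_def by blast+
  then show "s k + real k * d \<le> (\<Sum>i=1..k. (x i + y i) / 2)" unfolding sum_mid by argo
next
  show "(\<Sum>i=1..N+1. (x i + y i) / 2) = T + real N * d"
    using x y unfolding feas_P_def feas_Pe_def by (simp add: sum.distrib sum_divide_distrib[symmetric])
next
  fix i assume "i \<in> {2..N}"
  then show "2 * d \<le> (x i + y i) / 2" using x y unfolding feas_P_def by fastforce
next
  show "d \<le> (x (N+1) + y (N+1)) / 2" using x y unfolding feas_P_def by argo
qed

lemma is_optimal_P_if_optimal_Pe: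
  assumes "is_optimal N (feas_Pe N d s T) x" "feas_P N d s T x"
  shows "is_optimal N (feas_P N d s T) x"
  using assms unfolding is_optimal_def feas_P_def by blast

lemma feas_P_prefix_bound:
  assumes x: "feas_P N d s T x" and k: "k \<in> {1..N}"
  shows "s k + real k * d + 2 * d * real (N - k) + d \<le> T + real N * d"
proof -
  have "(\<Sum>i=1..N+1. x i) = (\<Sum>i=1..k. x i) + (\<Sum>i=k+1..N. x i) + x (N+1)"
    using sum_atLeastAtMost_split[of 1 k N x] k by simp
  moreover have "(\<Sum>i=k+1..N. 2 * d) \<le> (\<Sum>i=k+1..N. x i)"
    using x k unfolding feas_P_def by (intro sum_mono) auto
  moreover have "s k + real k * d \<le> (\<Sum>i=1..k. x i)" "d \<le> x (N+1)"
    "(\<Sum>i=1..N+1. x i) = T + real N * d"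
    using x k unfolding feas_P_def feas_Pe_def by auto
  ultimately show ?thesis using k by (simp add: algebra_simps of_nat_diff)
qed

(* KKT conditions in disguise: g (N+1) is the multiplier of the budget constraint,
   g k - g (k+1) that of the k-th prefix constraint and y i - g i that of the lower bound
   on y i; g_drop and g_gap are complementary slackness. *)
lemma is_optimal_feas_P_if_potential:
  fixes g :: "nat \<Rightarrow> real"
  assumes y: "feas_P N d s T y"
    and g_antimono: "\<And>k. k \<in> {1..N} \<Longrightarrow> g (k+1) \<le> g k"
    and g_drop: "\<And>k. k \<in> {1..N} \<Longrightarrow> g (k+1) < g k \<Longrightarrow> (\<Sum>i=1..k. y i) = s k + real k * d"
    and g_le: "\<And>i. i \<in> {1..N+1} \<Longrightarrow> g i \<le> y i"
    and g_gap: "\<And>i. i \<in> {1..N+1} \<Longrightarrow> g i < y i \<Longrightarrow>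
                  (i \<in> {2..N} \<and> y i = 2 * d) \<or> (i = N+1 \<and> y i = d)"
  shows "is_optimal N (feas_P N d s T) y"
proof (rule is_optimal_if_variational_inequality[where F = "feas_P N d s T", OF y])
  fix z assume z: "feas_P N d s T z"
  define w where "w i = z i - y i" for i
  have sum_w: "(\<Sum>i=1..N+1. w i) = 0"
    using y z unfolding w_def feas_P_def feas_Pe_def by (simp add: sum_subtractf)
  have drop_w: "0 \<le> (g k - g (k+1)) * (\<Sum>i=1..k. w i)" if k: "k \<in> {1..N}" for k
  proof (cases "g (k+1) < g k")
    case True
    have "s k + real k * d \<le> (\<Sum>i=1..k. z i)" using z k unfolding feas_P_def feas_Pe_def by blast
    then have "0 \<le> (\<Sum>i=1..k. w i)" using g_drop[OF k True] unfolding w_def by (simp add: sum_subtractf)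
    then show ?thesis using True by simp
  next
    case False
    then show ?thesis using g_antimono[OF k] by simp
  qed
  have gap_w: "0 \<le> (y i - g i) * w i" if i: "i \<in> {1..N+1}" for i
  proof (cases "g i < y i")
    case True
    then have "y i \<le> z i" using g_gap[OF i] z unfolding feas_P_def by auto
    then show ?thesis using True unfolding w_def by simp
  next
    case False
    then show ?thesis using g_le[OF i] by simp
  qed
  have "(\<Sum>i=1..N+1. y i * w i) = (\<Sum>i=1..N+1. g i * w i) + (\<Sum>i=1..N+1. (y i - g i) * w i)"
    by (simp add: algebra_simps sum.distrib[symmetric])
  also have "(\<Sum>i=1..N+1. g i * w i) = (\<Sum>k=1..N. (g k - g (k+1)) * (\<Sum>i=1..k. w i))"
    using summation_by_parts[of g w N] sum_w by simp
  finally have "(\<Sum>i=1..N+1. y i * w i)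
      = (\<Sum>k=1..N. (g k - g (k+1)) * (\<Sum>i=1..k. w i)) + (\<Sum>i=1..N+1. (y i - g i) * w i)" .
  moreover have "0 \<le> (\<Sum>k=1..N. (g k - g (k+1)) * (\<Sum>i=1..k. w i))"
    by (intro sum_nonneg drop_w)
  moreover have "0 \<le> (\<Sum>i=1..N+1. (y i - g i) * w i)"
    by (intro sum_nonneg gap_w)
  ultimately show "0 \<le> (\<Sum>i=1..N+1. y i * (z i - y i))" unfolding w_def by linarith
qed

definition transfer :: "(nat \<Rightarrow> real) \<Rightarrow> nat \<Rightarrow> real \<Rightarrow> nat \<Rightarrow> real" where
  "transfer x k e i = x i + (if i = k then e else 0) - (if i = k+1 then e else 0)"

lemma sum_transfer:
  assumes "1 \<le> k"
  shows "(\<Sum>i=1..j. transfer x k e i)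
    = (\<Sum>i=1..j. x i) + (if k \<le> j then e else 0) - (if k+1 \<le> j then e else 0)"
  using assms unfolding transfer_def by (simp add: sum.distrib sum_subtractf)

lemma feas_Pe_transfer:
  assumes x: "feas_Pe N d s T x" and k: "k \<in> {1..N}"
    and e: "s k + real k * d \<le> (\<Sum>i=1..k. x i) + e"
  shows "feas_Pe N d s T (transfer x k e)"
  unfolding feas_Pe_def
proof (intro conjI ballI)
  fix j assume j: "j \<in> {1..N}"
  show "s j + real j * d \<le> (\<Sum>i=1..j. transfer x k e i)"
  proof (cases "j = k")
    case True
    then show ?thesis using e k sum_transfer by simp
  next
    case False
    then have "(k \<le> j) = (k+1 \<le> j)" by auto
    then show ?thesis using x j k sum_transfer unfolding feas_Pe_def by auto
  qed
next
  show "(\<Sum>i=1..N+1. transfer x k e i) = T + real N * d"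
    using x k sum_transfer[of k x e "N+1"] unfolding feas_Pe_def by simp
qed

lemma aoi_obj_transfer:
  assumes k: "k \<in> {1..N}"
  shows "aoi_obj N (transfer x k e) = aoi_obj N x + 2 * e * (x k - x (k+1)) + 2 * e^2"
proof -
  have "(transfer x k e i)^2
      = (x i)^2 + (if i = k then 2 * e * x k + e^2 else 0) + (if i = k+1 then e^2 - 2 * e * x (k+1) else 0)" for i
    unfolding transfer_def by (auto simp: power2_eq_square algebra_simps)
  then show ?thesis
    using k unfolding aoi_obj_def by (simp add: sum.distrib algebra_simps power2_eq_square)
qed

lemma Pe_opt_transfer:
  assumes opt: "is_optimal N (feas_Pe N d s T) x" and k: "k \<in> {1..N}"
    and e: "s k + real k * d \<le> (\<Sum>i=1..k. x i) + e"
  shows "0 \<le> e * (x k - x (k+1) + e)"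
proof -
  have "feas_Pe N d s T x" using opt unfolding is_optimal_def by blast
  then have "aoi_obj N x \<le> aoi_obj N (transfer x k e)"
    using opt feas_Pe_transfer[of N d s T x, OF _ k e] unfolding is_optimal_def by blast
  then show ?thesis unfolding aoi_obj_transfer[OF k] by (simp add: power2_eq_square algebra_simps)
qed

lemma Pe_opt_antimono_step:
  assumes opt: "is_optimal N (feas_Pe N d s T) x" and k: "k \<in> {1..N}"
  shows "x (k+1) \<le> x k"
proof (rule ccontr)
  assume "\<not> x (k+1) \<le> x k"
  define e where "e = (x (k+1) - x k) / 2"
  have e: "0 < e" using \<open>\<not> x (k+1) \<le> x k\<close> unfolding e_def by simp
  have "s k + real k * d \<le> (\<Sum>i=1..k. x i)"
    using opt k unfolding is_optimal_def feas_Pe_def by blast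
  then have "0 \<le> e * (x k - x (k+1) + e)" using Pe_opt_transfer[OF opt k] e by simp
  moreover have "x k - x (k+1) + e = - e" unfolding e_def by (simp add: field_simps)
  ultimately have "0 \<le> - (e * e)" by (metis mult_minus_right)
  then show False using mult_pos_pos[OF e e] by linarith
qed

lemma Pe_opt_antimono:
  assumes opt: "is_optimal N (feas_Pe N d s T) x"
    and "1 \<le> i" "i \<le> j" "j \<le> N+1"
  shows "x j \<le> x i"
  using \<open>i \<le> j\<close> \<open>j \<le> N+1\<close>
proof (induction j rule: dec_induct)
  case (step j)
  then show ?case using Pe_opt_antimono_step[OF opt, of j] \<open>1 \<le> i\<close> by simp
qed simp

lemma Pe_opt_prefix_tight:
  assumes opt: "is_optimal N (feas_Pe N d s T) x" and k: "k \<in> {1..N}"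
    and drop: "x (k+1) < x k"
  shows "(\<Sum>i=1..k. x i) = s k + real k * d"
proof (rule ccontr)
  assume "(\<Sum>i=1..k. x i) \<noteq> s k + real k * d"
  moreover have "s k + real k * d \<le> (\<Sum>i=1..k. x i)"
    using opt k unfolding is_optimal_def feas_Pe_def by blast
  ultimately have slack: "0 < (\<Sum>i=1..k. x i) - (s k + real k * d)" by simp
  define e where "e = - min ((x k - x (k+1)) / 2) ((\<Sum>i=1..k. x i) - (s k + real k * d))"
  have e_neg: "e < 0" using slack drop unfolding e_def by simp
  have "- e \<le> (x k - x (k+1)) / 2" unfolding e_def minus_minus by (rule min.cobounded1)
  then have "0 < x k - x (k+1) + e" using drop by argo
  then have "e * (x k - x (k+1) + e) < 0" using e_neg by (rule mult_neg_pos[rotated])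
  moreover have "0 \<le> e * (x k - x (k+1) + e)"
    by (rule Pe_opt_transfer[OF opt k]) (simp add: e_def)
  ultimately show False by simp
qed

lemma Pe_opt_last_ge:
  assumes N: "1 \<le> N" and d: "0 < d" and T: "real (N+1) * d \<le> T"
    and P: "feas_P N d s T x"
    and opt: "is_optimal N (feas_Pe N d s T) xe"
    and head: "\<And>i. i \<in> {2..N} \<Longrightarrow> 2 * d \<le> xe i"
  shows "d \<le> xe (N+1)"
proof (cases "xe (N+1) < xe N")
  case True
  have "(\<Sum>i=1..N. xe i) = s N + real N * d" using Pe_opt_prefix_tight[OF opt _ True] N by simp
  moreover have "(\<Sum>i=1..N+1. xe i) = T + real N * d" using opt unfolding is_optimal_def feas_Pe_def by blast
  moreover have "s N + real N * d + d \<le> T + real N * d" using feas_P_prefix_bound[OF P, of N] N by simp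
  ultimately show ?thesis by simp
next
  case False
  then have eq: "xe (N+1) = xe N" using Pe_opt_antimono_step[OF opt, of N] N by simp
  show ?thesis
  proof (cases "N = 1")
    case True
    have "xe 1 + xe 2 = T + d"
      using opt True unfolding is_optimal_def feas_Pe_def by (simp add: numeral_2_eq_2)
    then show ?thesis using eq True T d by (simp add: numeral_2_eq_2)
  next
    case False
    then have "2 * d \<le> xe N" using head N by simp
    then show ?thesis using eq d by simp
  qed
qed

definition cap_tail :: "nat \<Rightarrow> real \<Rightarrow> real \<Rightarrow> (nat \<Rightarrow> real) \<Rightarrow> nat \<Rightarrow> nat \<Rightarrow> real" where
  "cap_tail N d T x m i =
     (if i \<le> m then x i
      else if i \<le> N then 2 * d
      else T + real N * d - (\<Sum>j=1..m. x j) - 2 * d * real (N - m))"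

lemma sum_cap_tail_head:
  "k \<le> m \<Longrightarrow> (\<Sum>i=1..k. cap_tail N d T x m i) = (\<Sum>i=1..k. x i)"
  unfolding cap_tail_def by (intro sum.cong) auto

lemma sum_cap_tail_tail:
  assumes "m \<le> k" "k \<le> N"
  shows "(\<Sum>i=1..k. cap_tail N d T x m i) = (\<Sum>i=1..m. x i) + 2 * d * real (k - m)"
proof -
  have "(\<Sum>i=1..k. cap_tail N d T x m i)
      = (\<Sum>i=1..m. cap_tail N d T x m i) + (\<Sum>i=m+1..k. cap_tail N d T x m i)"
    using sum_atLeastAtMost_split[of 1 m k] assms by simp
  also have "(\<Sum>i=m+1..k. cap_tail N d T x m i) = (\<Sum>i=m+1..k. 2 * d)"
    unfolding cap_tail_def using assms by (intro sum.cong) auto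
  finally show ?thesis using sum_cap_tail_head[of m m] by simp
qed

lemma sum_cap_tail:
  assumes "m \<le> N"
  shows "(\<Sum>i=1..N+1. cap_tail N d T x m i) = T + real N * d"
  using sum_cap_tail_tail[OF assms order_refl] assms by (simp add: cap_tail_def)

lemma feas_P_cap_tail:
  assumes m: "m \<le> N"
    and prefix_head: "\<And>k. k \<in> {1..m} \<Longrightarrow> s k + real k * d \<le> (\<Sum>i=1..k. x i)"
    and prefix_tail: "\<And>k. k \<in> {m<..N} \<Longrightarrow> s k + real k * d \<le> (\<Sum>i=1..m. x i) + 2 * d * real (k - m)"
    and head: "\<And>i. i \<in> {2..m} \<Longrightarrow> 2 * d \<le> x i"
    and last: "(\<Sum>i=1..m. x i) + 2 * d * real (N - m) + d \<le> T + real N * d"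
  shows "feas_P N d s T (cap_tail N d T x m)"
  unfolding feas_P_def feas_Pe_def
proof (intro conjI ballI)
  fix k assume k: "k \<in> {1..N}"
  show "s k + real k * d \<le> (\<Sum>i=1..k. cap_tail N d T x m i)"
  proof (cases "k \<le> m")
    case True
    then show ?thesis using prefix_head k sum_cap_tail_head by simp
  next
    case False
    then show ?thesis using prefix_tail k sum_cap_tail_tail[of m k N] by simp
  qed
next
  show "(\<Sum>i=1..N+1. cap_tail N d T x m i) = T + real N * d" using sum_cap_tail[OF m] .
next
  fix i assume "i \<in> {2..N}"
  then show "2 * d \<le> cap_tail N d T x m i" using head by (simp add: cap_tail_def)
next
  show "d \<le> cap_tail N d T x m (N+1)" using last m by (simp add: cap_tail_def)
qed

lemma P_opt_eq_cap_tail_Pe_opt: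
  assumes xs_opt: "is_optimal N (feas_P N d s T) xs"
    and xe_opt: "is_optimal N (feas_Pe N d s T) xe"
    and m: "m \<in> {1..N}"
    and tight: "(\<Sum>i=1..m. xe i) = s m + real m * d"
    and head: "\<And>i. i \<in> {2..m} \<Longrightarrow> 2 * d \<le> xe i"
    and tail: "\<And>i. i \<in> {m<..N+1} \<Longrightarrow> xe i \<le> 2 * d"
  shows "\<forall>i\<in>{1..N+1}. xs i = cap_tail N d T xe m i"
proof -
  let ?y = "cap_tail N d T xe m"
  define c where "c = ?y (N+1)"
  have xsF: "feas_P N d s T xs" using xs_opt unfolding is_optimal_def by blast
  have xe_prefix: "\<And>k. k \<in> {1..N} \<Longrightarrow> s k + real k * d \<le> (\<Sum>i=1..k. xe i)"
    and xe_total: "(\<Sum>i=1..N+1. xe i) = T + real N * d"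
    using xe_opt unfolding is_optimal_def feas_Pe_def by blast+
  have xe_tail_sum: "(\<Sum>i=1..k. xe i) \<le> (\<Sum>i=1..m. xe i) + 2 * d * real (k - m)"
    if "m \<le> k" "k \<le> N" for k
  proof -
    have "(\<Sum>i=m+1..k. xe i) \<le> (\<Sum>i=m+1..k. 2 * d)"
      using that tail by (intro sum_mono) auto
    then show ?thesis using sum_atLeastAtMost_split[of 1 m k xe] that m by (simp add: mult.commute)
  qed
  have c_le: "c \<le> xe (N+1)"
    using xe_total xe_tail_sum[of N] m unfolding c_def cap_tail_def by simp
  have yF: "feas_P N d s T ?y"
  proof (rule feas_P_cap_tail)
    fix k assume "k \<in> {m<..N}"
    then show "s k + real k * d \<le> (\<Sum>i=1..m. xe i) + 2 * d * real (k - m)"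
      using xe_prefix[of k] xe_tail_sum[of k] m by simp
  next
    show "(\<Sum>i=1..m. xe i) + 2 * d * real (N - m) + d \<le> T + real N * d"
      using feas_P_prefix_bound[OF xsF m] tight by simp
  qed (use m xe_prefix head in auto)
  have "is_optimal N (feas_P N d s T) ?y"
  proof (rule is_optimal_feas_P_if_potential[OF yF, where g = "\<lambda>i. if i \<le> m then xe i else c"])
    fix k assume k: "k \<in> {1..N}"
    have "xe (N+1) \<le> xe m" using Pe_opt_antimono[OF xe_opt, of m "N+1"] m by simp
    then show "(if k+1 \<le> m then xe (k+1) else c) \<le> (if k \<le> m then xe k else c)"
      using Pe_opt_antimono_step[OF xe_opt k] c_le by (cases "k = m") auto
    assume drop: "(if k+1 \<le> m then xe (k+1) else c) < (if k \<le> m then xe k else c)"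
    then have km: "k \<le> m" by (auto split: if_splits)
    moreover have "(\<Sum>i=1..k. xe i) = s k + real k * d"
      using tight Pe_opt_prefix_tight[OF xe_opt k] drop km by (cases "k = m") auto
    ultimately show "(\<Sum>i=1..k. ?y i) = s k + real k * d" using sum_cap_tail_head by simp
  next
    fix i assume i: "i \<in> {1..N+1}"
    have "c \<le> 2 * d" using c_le tail[of "N+1"] m by simp
    then show "(if i \<le> m then xe i else c) \<le> ?y i"
      using i unfolding c_def cap_tail_def by auto
    show "(if i \<le> m then xe i else c) < ?y i \<Longrightarrow> (i \<in> {2..N} \<and> ?y i = 2 * d) \<or> (i = N+1 \<and> ?y i = d)"
      using i m unfolding c_def cap_tail_def by (auto split: if_splits)
  qed
  then show ?thesis using is_optimal_unique[OF feas_P_midpoint xs_opt] by blast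
qed

(* With x_2 = ... = x_k = 2d, the k-th prefix constraint reads x_1 >= s k - (k - 2) d;
   the first term balances x_1 against x_(N+1) = T - (N - 2) d - x_1. *)
definition head_level :: "nat \<Rightarrow> real \<Rightarrow> (nat \<Rightarrow> real) \<Rightarrow> real \<Rightarrow> real" where
  "head_level N d s T =
     max ((T - (real N - 2) * d) / 2) (Max ((\<lambda>k. s k - (real k - 2) * d) ` {1..N}))"

lemma le_head_level:
  assumes "k \<in> {1..N}"
  shows "s k - (real k - 2) * d \<le> head_level N d s T"
  unfolding head_level_def using assms by (intro max.coboundedI2 Max_ge) auto

lemma head_level_attained:
  assumes "1 \<le> N"
  obtains k where "k \<in> {1..N}"
    and "(T - (real N - 2) * d) / 2 < head_level N d s T \<Longrightarrow> head_level N d s T = s k - (real k - 2) * d"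
proof -
  have "Max ((\<lambda>k. s k - (real k - 2) * d) ` {1..N}) \<in> (\<lambda>k. s k - (real k - 2) * d) ` {1..N}"
    using assms by (intro Max_in) auto
  then obtain k where k: "k \<in> {1..N}"
    and Max_eq: "Max ((\<lambda>k. s k - (real k - 2) * d) ` {1..N}) = s k - (real k - 2) * d"
    by blast
  show ?thesis
  proof (rule that[OF k])
    have max_eq: "max a b = b" if "a < max a b" for a b :: real
      using that by (auto simp: max_def split: if_splits)
    show "head_level N d s T = s k - (real k - 2) * d"
      if "(T - (real N - 2) * d) / 2 < head_level N d s T"
      using max_eq that unfolding head_level_def Max_eq by blast
  qed
qed

lemma head_level_le_2d:
  assumes xe_opt: "is_optimal N (feas_Pe N d s T) xe" and N: "1 \<le> N" and xe_1: "xe 1 < 2 * d"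
  shows "head_level N d s T \<le> 2 * d"
proof -
  have xe_le_1: "xe i \<le> xe 1" if "i \<in> {1..N+1}" for i
    using Pe_opt_antimono[OF xe_opt, of 1 i] that by simp
  have "s k - (real k - 2) * d \<le> 2 * d" if k: "k \<in> {1..N}" for k
  proof -
    have "(\<Sum>i=1..k. xe i) \<le> (\<Sum>i=1..k. xe 1)" using xe_le_1 k by (intro sum_mono) auto
    moreover have "s k + real k * d \<le> (\<Sum>i=1..k. xe i)"
      using xe_opt k unfolding is_optimal_def feas_Pe_def by blast
    ultimately have "s k + real k * d \<le> real k * xe 1" by simp
    moreover have "0 \<le> (real k - 1) * (2 * d - xe 1)" using k xe_1 by simp
    ultimately show ?thesis using xe_1 by (simp add: algebra_simps)
  qed
  moreover have "(T - (real N - 2) * d) / 2 < 2 * d"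
  proof -
    have "(\<Sum>i=1..N+1. xe i) \<le> (\<Sum>i=1..N+1. xe 1)" using xe_le_1 by (intro sum_mono) auto
    moreover have "(\<Sum>i=1..N+1. xe i) = T + real N * d"
      using xe_opt unfolding is_optimal_def feas_Pe_def by blast
    ultimately have "T + real N * d \<le> (real N + 1) * xe 1" by (simp add: add.commute)
    also have "\<dots> < (real N + 1) * (2 * d)" using xe_1 by simp
    finally show ?thesis by (simp add: field_simps)
  qed
  ultimately show ?thesis unfolding head_level_def using N by (simp add: Max_le_iff)
qed

lemma head_level_le:
  assumes N: "1 \<le> N" and d: "0 < d" and T: "real (N+1) * d \<le> T"
    and P: "feas_P N d s T x"
  shows "head_level N d s T \<le> T - (real N - 1) * d"
proof -
  have "s k - (real k - 2) * d \<le> T - (real N - 1) * d" if k: "k \<in> {1..N}" for k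
    using feas_P_prefix_bound[OF P k] k by (simp add: algebra_simps of_nat_diff)
  moreover have "(T - (real N - 2) * d) / 2 \<le> T - (real N - 1) * d"
    using T d by (simp add: field_simps)
  ultimately show ?thesis unfolding head_level_def using N by (simp add: Max_le_iff)
qed

lemma P_opt_eq_cap_tail_head_level:
  assumes N: "1 \<le> N" and d: "0 < d" and T: "real (N+1) * d \<le> T"
    and xs_opt: "is_optimal N (feas_P N d s T) xs"
    and xe_opt: "is_optimal N (feas_Pe N d s T) xe"
    and xe_1: "xe 1 < 2 * d"
  shows "\<forall>i\<in>{1..N+1}. xs i = cap_tail N d T (\<lambda>_. head_level N d s T) 1 i"
proof -
  define y1 where "y1 = head_level N d s T"
  define L where "L = (T - (real N - 2) * d) / 2"
  obtain k0 where k0: "k0 \<in> {1..N}" and attained: "L < y1 \<Longrightarrow> y1 = s k0 - (real k0 - 2) * d"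
    using head_level_attained[OF N] unfolding y1_def L_def by blast
  have xsF: "feas_P N d s T xs" using xs_opt unfolding is_optimal_def by blast
  have y1_le_2d: "y1 \<le> 2 * d" unfolding y1_def by (rule head_level_le_2d[OF xe_opt N xe_1])
  let ?y = "cap_tail N d T (\<lambda>_. y1) 1"
  define c where "c = ?y (N+1)"
  have c_eq: "c = 2 * L - y1"
    using N unfolding c_def cap_tail_def L_def by (simp add: algebra_simps of_nat_diff)
  have "L \<le> y1" unfolding y1_def L_def head_level_def by (rule max.cobounded1)
  then have c_le: "c \<le> y1" unfolding c_eq by simp
  have yF: "feas_P N d s T ?y"
  proof (rule feas_P_cap_tail)
    fix k :: nat assume "k \<in> {1..1}"
    then show "s k + real k * d \<le> (\<Sum>i=1..k. y1)" using le_head_level[of 1 N] N unfolding y1_def by simp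
  next
    fix k :: nat assume "k \<in> {1<..N}"
    then show "s k + real k * d \<le> (\<Sum>i=1..(1::nat). y1) + 2 * d * real (k - 1)"
      using le_head_level[of k N] unfolding y1_def by (simp add: algebra_simps of_nat_diff)
  next
    show "(\<Sum>i=1..(1::nat). y1) + 2 * d * real (N - 1) + d \<le> T + real N * d"
      using head_level_le[OF N d T xsF] N unfolding y1_def by (simp add: algebra_simps of_nat_diff)
  qed (use N in auto)
  have "is_optimal N (feas_P N d s T) ?y"
  proof (rule is_optimal_feas_P_if_potential[OF yF, where g = "\<lambda>i. if i \<le> k0 then y1 else c"])
    fix k assume k: "k \<in> {1..N}"
    show "(if k+1 \<le> k0 then y1 else c) \<le> (if k \<le> k0 then y1 else c)" using c_le by auto
    assume drop: "(if k+1 \<le> k0 then y1 else c) < (if k \<le> k0 then y1 else c)"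
    then have "k = k0" by (auto split: if_splits)
    moreover have "y1 = s k0 - (real k0 - 2) * d" using drop attained unfolding c_eq by (auto split: if_splits)
    ultimately show "(\<Sum>i=1..k. ?y i) = s k + real k * d"
      using sum_cap_tail_tail[of 1 k N d T "\<lambda>_. y1"] k by (simp add: algebra_simps of_nat_diff)
  next
    fix i assume i: "i \<in> {1..N+1}"
    show "(if i \<le> k0 then y1 else c) \<le> ?y i"
      using i k0 c_le y1_le_2d unfolding c_def cap_tail_def by auto
    show "(if i \<le> k0 then y1 else c) < ?y i \<Longrightarrow> (i \<in> {2..N} \<and> ?y i = 2 * d) \<or> (i = N+1 \<and> ?y i = d)"
      using i k0 unfolding c_def cap_tail_def by (auto split: if_splits)
  qed
  then show ?thesis using is_optimal_unique[OF feas_P_midpoint xs_opt] unfolding y1_def by blast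
qed

definition first_violation :: "nat \<Rightarrow> real \<Rightarrow> (nat \<Rightarrow> real) \<Rightarrow> nat" where
  "first_violation N d x = (LEAST i. 2 \<le> i \<and> i \<le> N+1 \<and> violates N d x i)"

lemma first_violation:
  assumes "\<exists>i\<in>{2..N+1}. violates N d x i"
  shows "first_violation N d x \<in> {2..N+1}" and "violates N d x (first_violation N d x)"
proof -
  have "2 \<le> first_violation N d x \<and> first_violation N d x \<le> N+1 \<and> violates N d x (first_violation N d x)"
    unfolding first_violation_def by (rule LeastI_ex) (use assms in auto)
  then show "first_violation N d x \<in> {2..N+1}" and "violates N d x (first_violation N d x)" by auto
qed

lemma ge_2d_before_first_violation:
  assumes "i \<in> {2..N}" and "i < first_violation N d x"
  shows "2 * d \<le> x i"
  using not_less_Least[of i "\<lambda>i. 2 \<le> i \<and> i \<le> N+1 \<and> violates N d x i"] assms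
  unfolding first_violation_def violates_def by auto

lemma Pe_opt_first_violation_le:
  assumes N: "1 \<le> N" and d: "0 < d" and T: "real (N+1) * d \<le> T"
    and P: "feas_P N d s T x"
    and xe_opt: "is_optimal N (feas_Pe N d s T) xe"
    and viol: "\<exists>i\<in>{2..N+1}. violates N d xe i"
  shows "first_violation N d xe \<le> N"
proof (rule ccontr)
  assume "\<not> first_violation N d xe \<le> N"
  then have last: "first_violation N d xe = N+1" using first_violation(1)[OF viol] by simp
  then have "xe (N+1) < d" using first_violation(2)[OF viol] unfolding violates_def by auto
  moreover have "d \<le> xe (N+1)"
    by (rule Pe_opt_last_ge[OF N d T P xe_opt]) (use ge_2d_before_first_violation last in auto)
  ultimately show False by simp
qed

lemma Pe_opt_lt_2d_from_first_violation:
  assumes xe_opt: "is_optimal N (feas_Pe N d s T) xe"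
    and viol: "\<exists>i\<in>{2..N+1}. violates N d xe i"
    and le_N: "first_violation N d xe \<le> N"
    and i: "first_violation N d xe \<le> i" "i \<le> N+1"
  shows "xe i < 2 * d"
proof -
  have "xe (first_violation N d xe) < 2 * d"
    using first_violation[OF viol] le_N unfolding violates_def by auto
  moreover have "xe i \<le> xe (first_violation N d xe)"
    using Pe_opt_antimono[OF xe_opt _ i] first_violation(1)[OF viol] by simp
  ultimately show ?thesis by simp
qed

lemma P_opt_at_first_violation_tight:
  assumes N: "1 \<le> N" and d: "0 < d" and T: "real (N+1) * d \<le> T"
    and xs_opt: "is_optimal N (feas_P N d s T) xs"
    and xe_opt: "is_optimal N (feas_Pe N d s T) xe"
    and viol: "\<exists>i\<in>{2..N+1}. violates N d xe i"
    and n0: "n0 = first_violation N d xe"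
    and n0_case: "n0 > 2 \<or> (n0 = 2 \<and> xe 1 = s 1 + d)"
  shows "(\<forall>i\<in>{1..n0-1}. xs i = xe i) \<and> (\<forall>i\<in>{n0..N}. xs i = 2 * d)"
proof -
  have xsF: "feas_P N d s T xs" using xs_opt unfolding is_optimal_def by blast
  have n0_le: "n0 \<le> N" unfolding n0 by (rule Pe_opt_first_violation_le[OF N d T xsF xe_opt viol])
  have before: "\<And>i. i \<in> {2..N} \<Longrightarrow> i < n0 \<Longrightarrow> 2 * d \<le> xe i"
    unfolding n0 by (rule ge_2d_before_first_violation)
  have after: "\<And>i. n0 \<le> i \<Longrightarrow> i \<le> N+1 \<Longrightarrow> xe i < 2 * d"
    unfolding n0 by (rule Pe_opt_lt_2d_from_first_violation[OF xe_opt viol n0_le[unfolded n0]])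
  define m where "m = n0 - 1"
  have m: "m \<in> {1..N}" and n0_m: "n0 = m + 1"
    using first_violation(1)[OF viol] n0_le unfolding m_def n0 by auto
  have tight: "(\<Sum>i=1..m. xe i) = s m + real m * d"
  proof (cases "n0 > 2")
    case True
    then have "xe (m+1) < xe m" using before[of m] after[of "m+1"] m n0_m by simp
    then show ?thesis by (rule Pe_opt_prefix_tight[OF xe_opt m])
  next
    case False
    then show ?thesis using n0_case n0_m by simp
  qed
  have "\<forall>i\<in>{1..N+1}. xs i = cap_tail N d T xe m i"
    by (rule P_opt_eq_cap_tail_Pe_opt[OF xs_opt xe_opt m tight])
       (use before after n0_m m in \<open>auto simp: less_imp_le\<close>)
  then show ?thesis using m n0_m unfolding cap_tail_def by auto
qed

lemma P_opt_at_first_violation_2_slack: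
  assumes N: "1 \<le> N" and d: "0 < d" and T: "real (N+1) * d \<le> T"
    and xs_opt: "is_optimal N (feas_P N d s T) xs"
    and xe_opt: "is_optimal N (feas_Pe N d s T) xe"
    and viol: "\<exists>i\<in>{2..N+1}. violates N d xe i"
    and n0: "first_violation N d xe = 2"
    and slack: "xe 1 \<noteq> s 1 + d"
  shows "xs 1 = max ((T - (real N - 2) * d) / 2) (Max ((\<lambda>k. s k - (real k - 2) * d) ` {1..N})) \<and>
         (\<forall>i\<in>{2..N}. xs i = 2 * d) \<and>
         xs (N+1) = T - (real N - 2) * d - xs 1"
proof -
  have xsF: "feas_P N d s T xs" using xs_opt unfolding is_optimal_def by blast
  have "first_violation N d xe \<le> N" by (rule Pe_opt_first_violation_le[OF N d T xsF xe_opt viol])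
  then have "xe 2 < 2 * d" using Pe_opt_lt_2d_from_first_violation[OF xe_opt viol, of 2] n0 by simp
  moreover have "xe 1 \<le> xe 2"
  proof (rule ccontr)
    assume "\<not> xe 1 \<le> xe 2"
    then have "(\<Sum>i=1..1. xe i) = s 1 + real 1 * d"
      using Pe_opt_prefix_tight[OF xe_opt, of 1] N by (simp add: numeral_2_eq_2)
    then show False using slack by simp
  qed
  ultimately have "xe 1 < 2 * d" by simp
  from P_opt_eq_cap_tail_head_level[OF N d T xs_opt xe_opt this]
  show ?thesis using N unfolding cap_tail_def head_level_def by (simp add: algebra_simps of_nat_diff)
qed

theorem theorem2:
  fixes N :: nat and d T :: real and s xs xe :: "nat \<Rightarrow> real"
  assumes N: "N \<ge> 1"
    and d: "d > 0"
    and s0: "0 \<le> s 1"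
    and s_mono: "\<forall>k\<in>{1..<N}. s k \<le> s (k+1)"
    and T: "T \<ge> real (N+1) * d"
    and xs_opt: "is_optimal N (feas_P N d s T) xs"
    and xe_opt: "is_optimal N (feas_Pe N d s T) xe"
  shows
    "((\<forall>i\<in>{2..N+1}. \<not> violates N d xe i) \<longrightarrow> (\<forall>i\<in>{1..N+1}. xs i = xe i)) \<and>
     ((\<exists>i\<in>{2..N+1}. violates N d xe i) \<longrightarrow>
        (let n0 = (LEAST i. 2 \<le> i \<and> i \<le> N+1 \<and> violates N d xe i) in
          n0 \<le> N \<and>
          ((n0 > 2 \<or> (n0 = 2 \<and> xe 1 = s 1 + d)) \<longrightarrow>
             (\<forall>i\<in>{1..n0-1}. xs i = xe i) \<and>
             (\<forall>i\<in>{n0..N}. xs i = 2 * d) \<and>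
             xs (N+1) = T + real N * d - (\<Sum>i=1..N. xs i)) \<and>
          ((n0 = 2 \<and> xe 1 \<noteq> s 1 + d) \<longrightarrow>
             xs 1 = max ((T - (real N - 2) * d) / 2)
                        (Max ((\<lambda>k. s k - (real k - 2) * d) ` {1..N})) \<and>
             (\<forall>i\<in>{2..N}. xs i = 2 * d) \<and>
             xs (N+1) = T - (real N - 2) * d - xs 1)))"
proof -
  have xsF: "feas_P N d s T xs" using xs_opt unfolding is_optimal_def by blast
  have "feas_P N d s T xe" if no_viol: "\<forall>i\<in>{2..N+1}. \<not> violates N d xe i"
  proof -
    have "\<forall>i\<in>{2..N}. 2 * d \<le> xe i" "d \<le> xe (N+1)"
      using no_viol N unfolding violates_def by force+
    then show ?thesis using xe_opt unfolding is_optimal_def feas_P_def by blast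
  qed
  then have no_violation: "(\<forall>i\<in>{2..N+1}. \<not> violates N d xe i) \<longrightarrow> (\<forall>i\<in>{1..N+1}. xs i = xe i)"
    using is_optimal_unique[OF feas_P_midpoint xs_opt is_optimal_P_if_optimal_Pe[OF xe_opt]] by blast
  have last: "xs (N+1) = T + real N * d - (\<Sum>i=1..N. xs i)"
    using xsF unfolding feas_P_def feas_Pe_def by simp
  show ?thesis
    unfolding Let_def first_violation_def[symmetric]
    using no_violation last Pe_opt_first_violation_le[OF N d T xsF xe_opt]
      P_opt_at_first_violation_tight[OF N d T xs_opt xe_opt _ refl]
      P_opt_at_first_violation_2_slack[OF N d T xs_opt xe_opt]
    by blast
qed

end
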